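(* For any valid packing $p$ of a finite multiset of items into a finite sequence of bins, there is a thrifty packing of those items into that sequence that uses a subset of the bins used by $p$.
   Context: Grid Scheduling setting: items have positive integer sizes; bins have positive integer sizes and form a sequence. A partial packing assigns some items to bins such that the total size of the items in each bin is at most the bin's size; a packing assigns every item. A bin is used if it receives at least one item. A (partial) packing is valid if each empty bin is smaller than every unpacked item and smaller than every item packed in a later bin. A bin in a (partial) packing is wasteful if its empty space (size minus total size of its items) is at least as large as the size of some unpacked item or of some item packed in a later bin. A (partial) packing is thrifty if it has no wasteful bin. *)

theory Defs
  imports Main
begin

text \<open>Items are given by a list xs of item sizes (the list represents the finite
multiset of items; item i has size xs ! i).  A partial packing is a map
a :: nat => nat option: a i = Some j means item i is put into bin j,
a i = None means item i is unpacked.\<close>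

definition load :: "nat list \<Rightarrow> (nat \<Rightarrow> nat option) \<Rightarrow> nat \<Rightarrow> nat" where
  "load xs a j = (\<Sum>i\<in>{i. i < length xs \<and> a i = Some j}. xs ! i)"

definition partial_packing :: "nat list \<Rightarrow> nat list \<Rightarrow> (nat \<Rightarrow> nat option) \<Rightarrow> bool" where
  "partial_packing xs bs a \<longleftrightarrow>
     (\<forall>i<length xs. \<forall>j. a i = Some j \<longrightarrow> j < length bs) \<and>
     (\<forall>j<length bs. load xs a j \<le> bs ! j)"

definition packing :: "nat list \<Rightarrow> nat list \<Rightarrow> (nat \<Rightarrow> nat option) \<Rightarrow> bool" where
  "packing xs bs a \<longleftrightarrow> partial_packing xs bs a \<and> (\<forall>i<length xs. a i \<noteq> None)"

definition used_bins :: "nat list \<Rightarrow> nat list \<Rightarrow> (nat \<Rightarrow> nat option) \<Rightarrow> nat set" where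
  "used_bins xs bs a = {j. j < length bs \<and> (\<exists>i<length xs. a i = Some j)}"

definition later_or_unpacked :: "(nat \<Rightarrow> nat option) \<Rightarrow> nat \<Rightarrow> nat \<Rightarrow> bool" where
  "later_or_unpacked a j i \<longleftrightarrow> a i = None \<or> (\<exists>k. a i = Some k \<and> j < k)"

definition valid :: "nat list \<Rightarrow> nat list \<Rightarrow> (nat \<Rightarrow> nat option) \<Rightarrow> bool" where
  "valid xs bs a \<longleftrightarrow>
     (\<forall>j<length bs. j \<notin> used_bins xs bs a \<longrightarrow>
        (\<forall>i<length xs. later_or_unpacked a j i \<longrightarrow> bs ! j < xs ! i))"

definition wasteful :: "nat list \<Rightarrow> nat list \<Rightarrow> (nat \<Rightarrow> nat option) \<Rightarrow> nat \<Rightarrow> bool" where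
  "wasteful xs bs a j \<longleftrightarrow>
     (\<exists>i<length xs. later_or_unpacked a j i \<and> xs ! i \<le> bs ! j - load xs a j)"

definition thrifty :: "nat list \<Rightarrow> nat list \<Rightarrow> (nat \<Rightarrow> nat option) \<Rightarrow> bool" where
  "thrifty xs bs a \<longleftrightarrow> (\<forall>j<length bs. \<not> wasteful xs bs a j)"

end

theory Submission
  imports Defs
begin

(* Start from the valid packing p and let U be its set of used bins.
   As long as the current packing q has a wasteful bin j, some item i that is
   unpacked or packed in a later bin fits into the free space of j; since q packs
   every item, i sits in a later bin k > j, and we move i from k to j.
   Throughout we keep the invariant that q is a packing, uses only bins of U, and
   every bin outside U is smaller than every item placed after it (initially this
   is exactly validity of p).  The invariant forces every wasteful bin into U, so a
   move never uses a new bin; moving items to earlier bins only shrinks the sets of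
   items "after" a bin, so the invariant is preserved.  Each move strictly
   decreases the sum of the bin indices of all items, hence the process stops at
   a thrifty packing. *)

lemma load_move_target:
  assumes "i < length xs" "q i \<noteq> Some j"
  shows "load xs (q(i := Some j)) j = load xs q j + xs ! i"
proof -
  have "{i'. i' < length xs \<and> (q(i := Some j)) i' = Some j}
        = insert i {i'. i' < length xs \<and> q i' = Some j}"
    using assms by auto
  moreover have "i \<notin> {i'. i' < length xs \<and> q i' = Some j}"
    using assms by auto
  ultimately show ?thesis
    unfolding load_def by simp
qed

lemma load_move_other:
  assumes "j' \<noteq> j"
  shows "load xs (q(i := Some j)) j' \<le> load xs q j'"
proof -
  have "{i'. i' < length xs \<and> (q(i := Some j)) i' = Some j'}
        \<subseteq> {i'. i' < length xs \<and> q i' = Some j'}"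
    using assms by auto
  then show ?thesis
    unfolding load_def by (intro sum_mono2) auto
qed

lemma packing_move:
  assumes pk: "packing xs bs q" and i: "i < length xs" and j: "j < length bs"
    and not_in_j: "q i \<noteq> Some j" and fits: "xs ! i \<le> bs ! j - load xs q j"
  shows "packing xs bs (q(i := Some j))"
proof -
  have in_range: "\<forall>i'<length xs. \<forall>j'. q i' = Some j' \<longrightarrow> j' < length bs"
    and capacity: "\<forall>j'<length bs. load xs q j' \<le> bs ! j'"
    and total: "\<forall>i'<length xs. q i' \<noteq> None"
    using pk unfolding packing_def partial_packing_def by auto
  have "load xs (q(i := Some j)) j' \<le> bs ! j'" if "j' < length bs" for j'
  proof (cases "j' = j")
    case True
    then show ?thesis
      using load_move_target[of i xs q j] i not_in_j fits capacity j by auto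
  next
    case False
    then show ?thesis
      using load_move_other[of j' j xs q i] capacity that by fastforce
  qed
  then show ?thesis
    using in_range total j unfolding packing_def partial_packing_def by auto
qed

lemma used_bins_move:
  assumes "j < length bs"
  shows "used_bins xs bs (q(i := Some j)) \<subseteq> insert j (used_bins xs bs q)"
  using assms unfolding used_bins_def by auto

lemma later_or_unpacked_move:
  assumes "q i = Some k" "j < k" "later_or_unpacked (q(i := Some j)) j0 i'"
  shows "later_or_unpacked q j0 i'"
  using assms unfolding later_or_unpacked_def by (auto split: if_splits)

(* Termination measure: the sum of the bin indices of all items. *)
definition bin_index_sum :: "nat list \<Rightarrow> (nat \<Rightarrow> nat option) \<Rightarrow> nat" where
  "bin_index_sum xs q = (\<Sum>i<length xs. the (q i))"

lemma bin_index_sum_move: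
  assumes "i < length xs" "q i = Some k" "j < k"
  shows "bin_index_sum xs (q(i := Some j)) < bin_index_sum xs q"
  unfolding bin_index_sum_def
proof (rule sum_strict_mono_ex1)
  show "\<forall>i'\<in>{..<length xs}. the ((q(i := Some j)) i') \<le> the (q i')"
    using assms by auto
  show "\<exists>i'\<in>{..<length xs}. the ((q(i := Some j)) i') < the (q i')"
    using assms by (intro bexI[of _ i]) auto
qed simp

definition small_outside :: "nat list \<Rightarrow> nat list \<Rightarrow> nat set \<Rightarrow> (nat \<Rightarrow> nat option) \<Rightarrow> bool" where
  "small_outside xs bs U q \<longleftrightarrow>
     (\<forall>j<length bs. j \<notin> U \<longrightarrow>
        (\<forall>i<length xs. later_or_unpacked q j i \<longrightarrow> bs ! j < xs ! i))"

lemma valid_small_outside: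
  "valid xs bs p \<Longrightarrow> small_outside xs bs (used_bins xs bs p) p"
  unfolding valid_def small_outside_def by blast

lemma wasteful_bin_witness:
  assumes pk: "packing xs bs q" and used: "used_bins xs bs q \<subseteq> U"
    and small: "small_outside xs bs U q"
    and j: "j < length bs" and waste: "wasteful xs bs q j"
  obtains i k where "i < length xs" "q i = Some k" "j < k" "j \<in> U"
    "xs ! i \<le> bs ! j - load xs q j"
proof -
  obtain i where i: "i < length xs" and late: "later_or_unpacked q j i"
    and fits: "xs ! i \<le> bs ! j - load xs q j"
    using waste unfolding wasteful_def by auto
  obtain k where k: "q i = Some k" "j < k"
    using late pk i unfolding later_or_unpacked_def packing_def by auto
  have "j \<in> U"
  proof (rule ccontr)
    assume "j \<notin> U"
    then have "bs ! j < xs ! i"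
      using small j i late unfolding small_outside_def by auto
    moreover have "load xs q j = 0"
      using \<open>j \<notin> U\<close> used j unfolding load_def used_bins_def by (auto intro!: sum.neutral)
    ultimately show False
      using fits by simp
  qed
  then show ?thesis
    using that i k fits by blast
qed

lemma improve_wasteful:
  assumes pk: "packing xs bs q" and used: "used_bins xs bs q \<subseteq> U"
    and small: "small_outside xs bs U q" and not_thrifty: "\<not> thrifty xs bs q"
  obtains q' where "packing xs bs q'" "used_bins xs bs q' \<subseteq> U"
    "small_outside xs bs U q'" "bin_index_sum xs q' < bin_index_sum xs q"
proof -
  obtain j where j: "j < length bs" and waste: "wasteful xs bs q j"
    using not_thrifty unfolding thrifty_def by auto
  obtain i k where i: "i < length xs" and k: "q i = Some k" "j < k" and jU: "j \<in> U"
    and fits: "xs ! i \<le> bs ! j - load xs q j"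
    using wasteful_bin_witness[OF pk used small j waste] by blast
  let ?q' = "q(i := Some j)"
  have "packing xs bs ?q'"
    using packing_move[OF pk i j _ fits] k by auto
  moreover have "used_bins xs bs ?q' \<subseteq> U"
    using used_bins_move[OF j, of xs q i] used jU by auto
  moreover have "small_outside xs bs U ?q'"
    using small later_or_unpacked_move[of q i k j] k unfolding small_outside_def by blast
  moreover have "bin_index_sum xs ?q' < bin_index_sum xs q"
    using bin_index_sum_move[of i xs q k j] i k by blast
  ultimately show ?thesis
    using that by blast
qed

lemma thrifty_below:
  assumes "packing xs bs q" "used_bins xs bs q \<subseteq> U" "small_outside xs bs U q"
  shows "\<exists>q'. packing xs bs q' \<and> thrifty xs bs q' \<and> used_bins xs bs q' \<subseteq> U"
  using assms
proof (induction "bin_index_sum xs q" arbitrary: q rule: less_induct)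
  case less
  show ?case
  proof (cases "thrifty xs bs q")
    case True
    then show ?thesis
      using less.prems by blast
  next
    case False
    then obtain q' where "packing xs bs q'" "used_bins xs bs q' \<subseteq> U"
      "small_outside xs bs U q'" "bin_index_sum xs q' < bin_index_sum xs q"
      using improve_wasteful less.prems by metis
    then show ?thesis
      using less.hyps by blast
  qed
qed

theorem lemma2:
  fixes xs bs :: "nat list" and p :: "nat \<Rightarrow> nat option"
  assumes "\<forall>x\<in>set xs. 0 < x"
    and "\<forall>b\<in>set bs. 0 < b"
    and "packing xs bs p"
    and "valid xs bs p"
  shows "\<exists>q. packing xs bs q \<and> thrifty xs bs q \<and> used_bins xs bs q \<subseteq> used_bins xs bs p"
  using thrifty_below[OF assms(3) order_refl valid_small_outside[OF assms(4)]] .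

end
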